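(* Fix a set size $m\ge 1$, a population CDF $F$ and a point $t$. For $r=1,\dots,m$ let $Y_{(r)}^{1},\dots,Y_{(r)}^{n_r}$ be the measured units of the $r$-th stratum of a MinPNS sample obtained under perfect ranking, all $n=\sum_{r=1}^m n_r$ observations being mutually independent, and the observations in stratum $r$ being identically distributed with CDF \[F_{(r)}(t)=\frac{1}{r}\sum_{i=1}^{r}\mathbb{B}\big(F(t),i,m+1-i\big).\] Let $F_n(t)=\frac1n\sum_{r=1}^m\sum_{j=1}^{n_r}\mathbb{I}(Y_{(r)}^j\le t)$, let $q_r=n_r/n$, let $g_n(x)=\sum_{r=1}^m q_r\frac1r\sum_{i=1}^r\mathbb{B}(x,i,m+1-i)$ for $x\in[0,1]$ (a bijection of $[0,1]$), and define the moment-based estimator $F_{mb}(t)=g_n^{-1}(F_n(t))$. Suppose $n_r\to\infty$ for every $r$ (i.e. $n^*=\min_{r}n_r\to\infty$) in such a way that $n_r/n\to\lambda_r\in(0,1)$ with $\sum_{r=1}^m\lambda_r=1$. Then $\sqrt n\,(F_{mb}(t)-F(t))$ converges in distribution to a normal distribution with mean zero and variance \[\sigma_{mb}^2=\Big(\sum_{r=1}^m\lambda_rF_{(r)}(t)\big(1-F_{(r)}(t)\big)\Big)\big(g'(F(t))\big)^{-2},\qquad g(x)=\sum_{r=1}^m\lambda_r\frac1r\sum_{i=1}^r\mathbb{B}(x,i,m+1-i).\]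
   Context: $\mathbb{B}(x,i,m+1-i)=\int_0^x i\binom{m}{i}u^{i-1}(1-u)^{m-i}\,du$ is the CDF of the Beta$(i,m+1-i)$ distribution evaluated at $x$; $\mathbb{I}$ is the indicator function. MinPNS (minimum partial nomination sampling): $n$ independent sets of $m$ units are drawn from the population; in each set the unit judged smallest is measured, but the ranker may declare that this unit is tied with other units, in which case one of the tied units is chosen at random; a measured unit is in stratum $r$ if it came from a set in which exactly $r$ units (including itself) were declared tied for smallest. Perfect ranking means that in every set the tied units are exactly the $r$ smallest units of the set, so that the measured unit is a uniformly random one of the $r$ smallest order statistics of $m$ i.i.d. draws from $F$; the stratum sizes $n_r$ are treated as given. *)

theory Defs
  imports "HOL-Probability.Probability"
begin

text \<open>CDF of the Beta(i, m+1-i) distribution at x (the paper's B(x,i,m+1-i)).\<close>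
definition betaB :: "nat \<Rightarrow> nat \<Rightarrow> real \<Rightarrow> real" where
  "betaB m i x = (LBINT u=0..x. real i * real (m choose i) * u ^ (i - 1) * (1 - u) ^ (m - i))"

definition Fstrat :: "nat \<Rightarrow> (real \<Rightarrow> real) \<Rightarrow> nat \<Rightarrow> real \<Rightarrow> real" where
  "Fstrat m F r s = (1 / real r) * (\<Sum>i=1..r. betaB m i (F s))"

definition gmix :: "nat \<Rightarrow> (nat \<Rightarrow> real) \<Rightarrow> real \<Rightarrow> real" where
  "gmix m w x = (\<Sum>r=1..m. w r * (1 / real r) * (\<Sum>i=1..r. betaB m i x))"

definition normal_var :: "real \<Rightarrow> real measure" where
  "normal_var v = (if v = 0 then return borel 0 else density lborel (normal_density 0 (sqrt v)))"

end

theory Submission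
  imports Defs
begin

text \<open>Since g_n is a strictly increasing bijection of [0,1], for fixed x and large n the event
  sqrt n (F_mb(t) - F(t)) \<le> x is the event
  sqrt n (F_n(t) - g_n(F(t))) \<le> sqrt n (g_n(F(t) + x / sqrt n) - g_n(F(t))).
  The left-hand side is a normalised sum of independent centred indicators; comparing characteristic
  functions stratum by stratum, it converges to N(0, \<Sum>_r \<lambda>_r F_(r)(t) (1 - F_(r)(t))).
  The right-hand side tends to x g'(F(t)) because the Beta distribution functions are differentiable,
  and distribution functions converge also along points tending to a continuity point of the limit.
  If F(t) is 0 or 1, both sides degenerate and the limit is the point mass at 0.\<close>

section \<open>Beta distribution functions and their mixtures\<close>

definition beta_density :: "nat \<Rightarrow> nat \<Rightarrow> real \<Rightarrow> real" where
  "beta_density m i u = real i * real (m choose i) * u ^ (i - 1) * (1 - u) ^ (m - i)"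

lemma beta_density_nonneg: "0 \<le> u \<Longrightarrow> u \<le> 1 \<Longrightarrow> 0 \<le> beta_density m i u"
  unfolding beta_density_def by (intro mult_nonneg_nonneg) auto

lemma betaB_has_real_derivative: "(betaB m i has_real_derivative beta_density m i x) (at x)"
proof -
  define a b where "a = min 0 (x - 1)" and "b = max 0 (x + 1)"
  have "continuous_on {a..b} (beta_density m i)"
    unfolding beta_density_def by (intro continuous_intros)
  hence "((\<lambda>u. LBINT y=0..u. beta_density m i y) has_vector_derivative beta_density m i x)
           (at x within {a..b})"
    using interval_integral_FTC2[of a 0 b "beta_density m i" x] by (auto simp: a_def b_def zero_ereal_def)
  hence "((\<lambda>u. LBINT y=0..u. beta_density m i y) has_vector_derivative beta_density m i x) (at x)"
    by (subst (asm) at_within_Icc_at) (auto simp: a_def b_def)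
  moreover have "betaB m i = (\<lambda>u. LBINT y=0..u. beta_density m i y)"
    by (simp add: betaB_def beta_density_def fun_eq_iff)
  ultimately show ?thesis
    by (simp add: has_real_derivative_iff_has_vector_derivative)
qed

lemma betaB_0: "betaB m i 0 = 0"
  by (simp add: betaB_def zero_ereal_def)

lemma Beta_of_nat_Suc:
  "Beta (real (Suc k)) (real (Suc j)) = fact k * fact j / fact (Suc (k + j))"
proof -
  have Gamma_Suc: "Gamma (real (Suc n)) = fact n" for n
    by (simp add: Gamma_fact)
  have "real (Suc k) + real (Suc j) = real (Suc (Suc (k + j)))"
    by simp
  thus ?thesis
    unfolding Beta_def by (simp only: Gamma_Suc)
qed

lemma betaB_1:
  assumes "1 \<le> i" "i \<le> m"
  shows "betaB m i 1 = 1"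
proof -
  obtain k j where i: "i = Suc k" and m: "m = Suc (k + j)"
  proof
    show "i = Suc (i - 1)" "m = Suc (i - 1 + (m - i))"
      using assms by simp_all
  qed
  have B: "((\<lambda>u. u powr (real (Suc k) - 1) * (1 - u) powr (real (Suc j) - 1))
             has_integral Beta (real (Suc k)) (real (Suc j))) {0<..<1}"
    using has_integral_Beta_real[of "real (Suc k)" "real (Suc j)"]
    by (simp only: has_integral_Icc_iff_Ioo)
  have E: "u powr (real (Suc k) - 1) * (1 - u) powr (real (Suc j) - 1) = u ^ k * (1 - u) ^ j"
    if "u \<in> {0<..<1}" for u
    using that by (simp add: powr_realpow)
  have "((\<lambda>u. u ^ k * (1 - u) ^ j) has_integral Beta (real (Suc k)) (real (Suc j))) {0<..<1}"
    by (rule has_integral_eq[OF _ B]) (fact E)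
  hence "(beta_density m i has_integral
            real (Suc k) * real (Suc (k + j) choose Suc k) * Beta (real (Suc k)) (real (Suc j))) {0..1}"
    unfolding has_integral_Icc_iff_Ioo beta_density_def[abs_def] i m
    by (simp add: mult.assoc has_integral_mult_right)
  moreover have "real (Suc k) * real (Suc (k + j) choose Suc k) * Beta (real (Suc k)) (real (Suc j)) = 1"
  proof -
    have "real (Suc (k + j) choose Suc k) = fact (Suc (k + j)) / (fact (Suc k) * fact j)"
      by (simp add: binomial_fact del: binomial_Suc_Suc of_nat_Suc)
    thus ?thesis
      unfolding Beta_of_nat_Suc by (simp add: field_simps del: of_nat_Suc)
  qed
  moreover have "set_integrable lborel {0..1} (beta_density m i)"
    unfolding beta_density_def by (intro borel_integrable_atLeastAtMost' continuous_intros)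
  ultimately show ?thesis
    by (simp add: betaB_def beta_density_def[abs_def] interval_integral_eq_integral integral_unique
        zero_ereal_def one_ereal_def)
qed

definition strat_cdf :: "nat \<Rightarrow> nat \<Rightarrow> real \<Rightarrow> real" where
  "strat_cdf m r x = (1 / real r) * (\<Sum>i=1..r. betaB m i x)"

definition strat_density :: "nat \<Rightarrow> nat \<Rightarrow> real \<Rightarrow> real" where
  "strat_density m r x = (1 / real r) * (\<Sum>i=1..r. beta_density m i x)"

lemma Fstrat_eq_strat_cdf: "Fstrat m F r s = strat_cdf m r (F s)"
  unfolding Fstrat_def strat_cdf_def ..

lemma strat_cdf_has_real_derivative: "(strat_cdf m r has_real_derivative strat_density m r x) (at x)"
  unfolding strat_cdf_def strat_density_def
  by (intro DERIV_cmult DERIV_sum betaB_has_real_derivative)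

lemma isCont_strat_cdf: "isCont (strat_cdf m r) x"
  using strat_cdf_has_real_derivative by (rule DERIV_isCont)

lemma strat_cdf_0: "strat_cdf m r 0 = 0"
  by (simp add: strat_cdf_def betaB_0)

lemma strat_cdf_1: "1 \<le> r \<Longrightarrow> r \<le> m \<Longrightarrow> strat_cdf m r 1 = 1"
  by (simp add: strat_cdf_def betaB_1)

lemma strat_density_nonneg: "0 \<le> u \<Longrightarrow> u \<le> 1 \<Longrightarrow> 0 \<le> strat_density m r u"
  unfolding strat_density_def by (intro mult_nonneg_nonneg sum_nonneg beta_density_nonneg) auto

text \<open>The summand \<open>i = 1\<close> is positive on \<open>[0,1)\<close> and the summand \<open>i = m\<close> on \<open>(0,1]\<close>.\<close>

lemma strat_density_pos:
  assumes "1 \<le> r" "r \<le> m" "0 \<le> u" "u \<le> 1" "u < 1 \<or> r = m"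
  shows "0 < strat_density m r u"
proof -
  obtain i where i: "i \<in> {1..r}" "0 < beta_density m i u"
  proof (cases "u < 1")
    case True
    thus ?thesis using assms by (intro that[of 1]) (auto simp: beta_density_def)
  next
    case False
    thus ?thesis using assms by (intro that[of m]) (auto simp: beta_density_def)
  qed
  moreover have "beta_density m i u \<le> (\<Sum>i=1..r. beta_density m i u)"
    using assms i by (intro member_le_sum beta_density_nonneg) auto
  ultimately show ?thesis
    using assms unfolding strat_density_def by simp
qed

lemma strict_mono_on_strat_cdf:
  assumes "1 \<le> r" "r \<le> m"
  shows "strict_mono_on {0..1} (strat_cdf m r)"
proof (rule strict_mono_onI)
  fix x y :: real assume xy: "x \<in> {0..1}" "y \<in> {0..1}" "x < y"
  show "strat_cdf m r x < strat_cdf m r y"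
  proof (rule DERIV_pos_imp_increasing_open[OF \<open>x < y\<close>])
    fix z assume "x < z" "z < y"
    hence "0 < strat_density m r z"
      using assms xy by (intro strat_density_pos) auto
    thus "\<exists>d. (strat_cdf m r has_real_derivative d) (at z) \<and> 0 < d"
      using strat_cdf_has_real_derivative by blast
  qed (intro continuous_at_imp_continuous_on ballI isCont_strat_cdf)
qed

lemma strat_cdf_in_unit:
  assumes "1 \<le> r" "r \<le> m" "0 \<le> x" "x \<le> 1"
  shows "0 \<le> strat_cdf m r x \<and> strat_cdf m r x \<le> 1"
  using strict_mono_on_leD[OF strict_mono_on_strat_cdf[OF assms(1,2)], of 0 x]
    strict_mono_on_leD[OF strict_mono_on_strat_cdf[OF assms(1,2)], of x 1] assms
  by (auto simp: strat_cdf_0 strat_cdf_1)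

lemma gmix_eq_sum_strat_cdf: "gmix m w x = (\<Sum>r=1..m. w r * strat_cdf m r x)"
  unfolding gmix_def strat_cdf_def by (simp add: mult.assoc)

lemma gmix_has_real_derivative:
  "(gmix m w has_real_derivative (\<Sum>r=1..m. w r * strat_density m r x)) (at x)"
  unfolding gmix_eq_sum_strat_cdf[abs_def]
  by (intro DERIV_sum DERIV_cmult strat_cdf_has_real_derivative)

lemma strict_mono_on_gmix:
  assumes w: "\<And>r. r \<in> {1..m} \<Longrightarrow> 0 \<le> w r" and r0: "r0 \<in> {1..m}" "0 < w r0"
  shows "strict_mono_on {0..1} (gmix m w)"
proof (rule strict_mono_onI)
  fix x y :: real assume xy: "x \<in> {0..1}" "y \<in> {0..1}" "x < y"
  show "gmix m w x < gmix m w y"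
    unfolding gmix_eq_sum_strat_cdf
  proof (rule sum_strict_mono_ex1)
    show "\<forall>r\<in>{1..m}. w r * strat_cdf m r x \<le> w r * strat_cdf m r y"
      using xy w by (auto intro!: mult_left_mono strict_mono_on_leD[OF strict_mono_on_strat_cdf])
    show "\<exists>r\<in>{1..m}. w r * strat_cdf m r x < w r * strat_cdf m r y"
      using xy r0 strict_mono_onD[OF strict_mono_on_strat_cdf, of r0 m x y]
      by (intro bexI[OF _ r0(1)] mult_strict_left_mono) auto
  qed simp
qed

lemma bij_betw_gmix:
  assumes w: "\<And>r. r \<in> {1..m} \<Longrightarrow> 0 \<le> w r" and r0: "r0 \<in> {1..m}" "0 < w r0"
    and sum_w: "(\<Sum>r=1..m. w r) = 1"
  shows "bij_betw (gmix m w) {0..1} {0..1}"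
proof -
  have mono: "strict_mono_on {0..1} (gmix m w)"
    using w r0 by (rule strict_mono_on_gmix)
  have ends: "gmix m w 0 = 0" "gmix m w 1 = 1"
    using sum_w by (simp_all add: gmix_eq_sum_strat_cdf strat_cdf_0 strat_cdf_1)
  have cont: "continuous_on {0..1} (gmix m w)"
    using gmix_has_real_derivative
    by (intro continuous_at_imp_continuous_on ballI DERIV_isCont) blast
  have "gmix m w ` {0..1} = {0..1}"
  proof
    show "gmix m w ` {0..1} \<subseteq> {0..1}"
      using strict_mono_on_leD[OF mono, of 0] strict_mono_on_leD[OF mono, of _ 1] ends by auto
    show "{0..1} \<subseteq> gmix m w ` {0..1}"
    proof
      fix y :: real assume "y \<in> {0..1}"
      then obtain x where "0 \<le> x" "x \<le> 1" "gmix m w x = y"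
        using IVT'[of "gmix m w" 0 y 1] cont ends by auto
      thus "y \<in> gmix m w ` {0..1}" by auto
    qed
  qed
  thus ?thesis
    using strict_mono_on_imp_inj_on[OF mono] by (simp add: bij_betw_def)
qed

section \<open>Characteristic functions of centred indicators\<close>

definition centred_bernoulli_char :: "real \<Rightarrow> real \<Rightarrow> complex" where
  "centred_bernoulli_char p u =
     complex_of_real p * iexp (u * (1 - p)) + complex_of_real (1 - p) * iexp (- (u * p))"

lemma (in prob_space) char_centred_indicator:
  fixes X :: "'a \<Rightarrow> real"
  assumes X: "X \<in> borel_measurable M" and p: "prob {\<omega> \<in> space M. X \<omega> \<le> t} = p"
  shows "char (distr M borel (\<lambda>\<omega>. ((if X \<omega> \<le> t then 1 else 0) - p) / c)) s
           = centred_bernoulli_char p (s / c)"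
proof -
  define A where "A = {\<omega> \<in> space M. X \<omega> \<le> t}"
  define e1 e2 where "e1 = iexp (s / c * (1 - p))" and "e2 = iexp (- (s / c * p))"
  note X[measurable]
  have A: "A \<in> sets M"
    unfolding A_def by measurable
  have "char (distr M borel (\<lambda>\<omega>. ((if X \<omega> \<le> t then 1 else 0) - p) / c)) s
          = (CLINT \<omega>|M. iexp (s * (((if X \<omega> \<le> t then 1 else 0) - p) / c)))"
    unfolding char_def by (subst integral_distr) auto
  also have "\<dots> = (CLINT \<omega>|M. indicator A \<omega> *\<^sub>R (e1 - e2) + e2)"
    by (intro Bochner_Integration.integral_cong) (auto simp: A_def e1_def e2_def indicator_def)
  also have "\<dots> = prob A *\<^sub>R (e1 - e2) + e2"
    using A by (simp add: integrable_indicator less_top[symmetric] integral_indicator prob_space)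
  also have "\<dots> = centred_bernoulli_char p (s / c)"
    using p unfolding A_def centred_bernoulli_char_def e1_def e2_def
    by (simp add: algebra_simps scaleR_conv_of_real)
  finally show ?thesis .
qed

lemma (in prob_space) char_sum_centred_indicators:
  fixes X :: "'i \<Rightarrow> 'a \<Rightarrow> real"
  assumes indep: "indep_vars (\<lambda>_. borel) X I"
    and p: "\<And>i. i \<in> I \<Longrightarrow> prob {\<omega> \<in> space M. X i \<omega> \<le> t} = p i"
  shows "char (distr M borel (\<lambda>\<omega>. \<Sum>i\<in>I. ((if X i \<omega> \<le> t then 1 else 0) - p i) / c)) s
           = (\<Prod>i\<in>I. centred_bernoulli_char (p i) (s / c))"
proof -
  have X: "X i \<in> borel_measurable M" if "i \<in> I" for i
    using indep that unfolding indep_vars_def2 by blast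
  have "indep_vars (\<lambda>_. borel) (\<lambda>i \<omega>. ((if X i \<omega> \<le> t then 1 else 0) - p i) / c) I"
    by (rule indep_vars_compose2[OF indep]) measurable
  hence "char (distr M borel (\<lambda>\<omega>. \<Sum>i\<in>I. ((if X i \<omega> \<le> t then 1 else 0) - p i) / c)) s
           = (\<Prod>i\<in>I. char (distr M borel (\<lambda>\<omega>. ((if X i \<omega> \<le> t then 1 else 0) - p i) / c)) s)"
    by (rule char_distr_sum)
  also have "\<dots> = (\<Prod>i\<in>I. centred_bernoulli_char (p i) (s / c))"
    using char_centred_indicator[OF X p] by simp
  finally show ?thesis .
qed

lemma norm_iexp_taylor2_le:
  "cmod (iexp x - (1 + \<i> * x - x\<^sup>2 / 2)) \<le> \<bar>x\<bar> ^ 3 / 6"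
proof -
  have "cmod (iexp x - (\<Sum>k\<le>2. (\<i> * x) ^ k / fact k)) \<le> \<bar>x\<bar> ^ Suc 2 / fact (Suc 2)"
    by (rule iexp_approx1)
  moreover have "(\<Sum>k\<le>2. (\<i> * complex_of_real x) ^ k / fact k) = 1 + \<i> * x - x\<^sup>2 / 2"
    by (simp add: eval_nat_numeral complex_eq_iff power2_eq_square)
  moreover have "fact (Suc 2) = (6::real)"
    by (simp add: eval_nat_numeral)
  ultimately show ?thesis
    by simp
qed

lemma norm_centred_bernoulli_char_le_1:
  assumes "0 \<le> p" "p \<le> 1"
  shows "cmod (centred_bernoulli_char p u) \<le> 1"
proof -
  have "cmod (centred_bernoulli_char p u)
          \<le> cmod (complex_of_real p * iexp (u * (1 - p))) + cmod (complex_of_real (1 - p) * iexp (- (u * p)))"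
    unfolding centred_bernoulli_char_def by (rule norm_triangle_ineq)
  also have "\<dots> = 1"
    using assms by (simp add: norm_mult del: of_real_diff)
  finally show ?thesis .
qed

text \<open>The first-order terms of the two Taylor expansions cancel because the variable is centred.\<close>

lemma centred_bernoulli_char_taylor:
  assumes "0 \<le> p" "p \<le> 1"
  shows "cmod (centred_bernoulli_char p u - complex_of_real (1 - u\<^sup>2 * (p * (1 - p)) / 2))
           \<le> \<bar>u\<bar> ^ 3 / 6"
proof -
  define a b where "a = u * (1 - p)" and "b = - (u * p)"
  define R where "R x = iexp x - (1 + \<i> * x - x\<^sup>2 / 2)" for x
  have "\<bar>a\<bar> \<le> \<bar>u\<bar>" "\<bar>b\<bar> \<le> \<bar>u\<bar>"
    using assms by (auto simp: a_def b_def abs_mult intro!: mult_left_le)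
  hence Ra: "cmod (R a) \<le> \<bar>u\<bar> ^ 3 / 6" and Rb: "cmod (R b) \<le> \<bar>u\<bar> ^ 3 / 6"
    using norm_iexp_taylor2_le[of a] norm_iexp_taylor2_le[of b] unfolding R_def
    by (smt (verit) abs_ge_zero divide_right_mono power_mono)+
  have "complex_of_real (1 - u\<^sup>2 * (p * (1 - p)) / 2)
          = p * (1 + \<i> * a - a\<^sup>2 / 2) + complex_of_real (1 - p) * (1 + \<i> * b - b\<^sup>2 / 2)"
    unfolding a_def b_def by (simp add: complex_eq_iff power2_eq_square field_simps; algebra)
  hence "centred_bernoulli_char p u - complex_of_real (1 - u\<^sup>2 * (p * (1 - p)) / 2) = p * R a + complex_of_real (1 - p) * R b"
    unfolding centred_bernoulli_char_def R_def a_def b_def by (simp add: algebra_simps)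
  also have "cmod \<dots> \<le> p * cmod (R a) + (1 - p) * cmod (R b)"
    using assms norm_triangle_ineq[of "p * R a" "complex_of_real (1 - p) * R b"] by (simp add: norm_mult del: of_real_diff)
  also have "\<dots> \<le> p * (\<bar>u\<bar> ^ 3 / 6) + (1 - p) * (\<bar>u\<bar> ^ 3 / 6)"
    using assms Ra Rb by (intro add_mono mult_left_mono) auto
  also have "\<dots> = \<bar>u\<bar> ^ 3 / 6"
    by (simp add: field_simps)
  finally show ?thesis .
qed

section \<open>Normal laws, weak convergence and the delta method\<close>

lemma normal_var_eq_distr_std_normal:
  assumes "0 \<le> v"
  shows "normal_var v = distr std_normal_distribution borel (\<lambda>y. sqrt v * y)"
proof -
  interpret std: prob_space std_normal_distribution
    by (rule prob_space_normal_density) simp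
  show ?thesis
  proof (cases "v = 0")
    case True
    thus ?thesis
      by (simp add: normal_var_def)
  next
    case False
    have "distributed std_normal_distribution lborel (\<lambda>x. x) (normal_density 0 1)"
      by (auto simp: distributed_def distr_id2 measurable_ident_sets)
    hence "distributed std_normal_distribution lborel (\<lambda>y. sqrt v * y) (normal_density 0 (sqrt v))"
      using std.normal_density_affine[of "\<lambda>x. x" 0 1 "sqrt v" 0] assms False by simp
    hence "distr std_normal_distribution lborel (\<lambda>y. sqrt v * y) = normal_var v"
      using False by (simp add: distributed_def normal_var_def)
    moreover have "distr std_normal_distribution lborel (\<lambda>y. sqrt v * y)
                     = distr std_normal_distribution borel (\<lambda>y. sqrt v * y)"
      by (rule distr_cong) auto
    ultimately show ?thesis
      by simp
  qed
qed

lemma real_distribution_normal_var: "0 \<le> v \<Longrightarrow> real_distribution (normal_var v)"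
  unfolding normal_var_eq_distr_std_normal
  by (intro prob_space.real_distribution_distr prob_space_normal_density) auto

lemma char_normal_var:
  assumes "0 \<le> v"
  shows "char (normal_var v) s = exp (- (v * s\<^sup>2) / 2)"
proof -
  have "char (normal_var v) s = char std_normal_distribution (sqrt v * s)"
    using assms unfolding normal_var_eq_distr_std_normal[OF assms] char_def
    by (subst integral_distr) (auto simp: ac_simps)
  thus ?thesis
    using assms by (simp add: char_std_normal_distribution power_mult_distrib)
qed

lemma cdf_normal_var_0: "cdf (normal_var 0) x = (if 0 \<le> x then 1 else 0)"
  by (simp add: cdf_def normal_var_def measure_return indicator_def)

lemma cdf_normal_var_divide:
  assumes "0 \<le> v" "0 < d"
  shows "cdf (normal_var (v / d\<^sup>2)) x = cdf (normal_var v) (x * d)"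
proof -
  have cdf: "cdf (normal_var w) y = measure std_normal_distribution {z. sqrt w * z \<le> y}"
    if "0 \<le> w" for w y
    unfolding normal_var_eq_distr_std_normal[OF that] cdf_def
    by (subst measure_distr) (auto simp: vimage_def)
  have "sqrt (v / d\<^sup>2) = sqrt v / d"
    using assms by (simp add: real_sqrt_divide)
  moreover have "{z. sqrt v / d * z \<le> x} = {z. sqrt v * z \<le> x * d}"
    using assms by (auto simp: field_simps)
  ultimately show ?thesis
    using assms by (simp add: cdf)
qed

lemma DERIV_scaled_increment_tendsto:
  fixes s :: "nat \<Rightarrow> real"
  assumes D: "(f has_real_derivative D) (at a)" and s: "filterlim s at_top sequentially"
  shows "(\<lambda>k. s k * (f (a + x / s k) - f a)) \<longlonglongrightarrow> x * D"
proof (cases "x = 0")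
  case True
  thus ?thesis by simp
next
  case False
  define h where "h k = x / s k" for k
  have "eventually (\<lambda>k. 0 < s k) sequentially"
    using s by (simp add: filterlim_at_top_dense)
  hence s_eq: "eventually (\<lambda>k. s k = x / h k) sequentially" and h_nz: "eventually (\<lambda>k. h k \<noteq> 0) sequentially"
    using False by (auto elim!: eventually_mono simp: h_def)
  have "filterlim h (at 0) sequentially"
    using h_nz tendsto_divide_0[OF tendsto_const filterlim_at_top_imp_at_infinity[OF s], of x]
    by (intro filterlim_atI) (simp_all add: h_def[abs_def])
  hence "(\<lambda>k. (f (a + h k) - f a) / h k) \<longlonglongrightarrow> D"
    by (rule filterlim_compose[OF DERIV_D[OF D]])
  hence "(\<lambda>k. x * ((f (a + h k) - f a) / h k)) \<longlonglongrightarrow> x * D"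
    by (rule tendsto_mult_left)
  moreover have "eventually (\<lambda>k. x * ((f (a + h k) - f a) / h k) = s k * (f (a + x / s k) - f a)) sequentially"
    using s_eq by eventually_elim (simp add: h_def)
  ultimately show ?thesis
    by (rule Lim_transform_eventually)
qed

text \<open>Sandwich \<open>c_seq k\<close> between continuity points \<open>a < c < b\<close> of \<open>cdf M\<close>; these exist because a
  monotone function has only countably many discontinuities.\<close>

lemma weak_conv_m_cdf_tendsto:
  assumes conv: "weak_conv_m M_seq M"
    and distr: "\<And>k. real_distribution (M_seq k)" "real_distribution M"
    and cont: "isCont (cdf M) c" and c_seq: "c_seq \<longlonglongrightarrow> c"
  shows "(\<lambda>k. cdf (M_seq k) (c_seq k)) \<longlonglongrightarrow> cdf M c"
proof (rule tendstoI)
  fix e :: real assume "0 < e"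
  then obtain \<eta> where "0 < \<eta>" and \<eta>: "\<And>y. dist y c < \<eta> \<Longrightarrow> dist (cdf M y) (cdf M c) < e / 2"
    using cont unfolding continuous_at_eps_delta by (meson half_gt_zero)
  have mono_cdf: "mono (cdf M)" "mono (cdf (M_seq k))" for k
    using distr by (auto simp: mono_def intro: finite_borel_measure.cdf_nondecreasing
        real_distribution.axioms(1) real_distribution.finite_borel_measure_M)
  have countable: "countable {x. \<not> isCont (cdf M) x}"
    by (rule mono_ctble_discont[OF mono_cdf(1)])
  obtain a b where a: "a \<in> {c - \<eta><..<c}" "isCont (cdf M) a" and b: "b \<in> {c<..<c + \<eta>}" "isCont (cdf M) b"
    using open_minus_countable[OF countable, of "{c - \<eta><..<c}"]
      open_minus_countable[OF countable, of "{c<..<c + \<eta>}"] \<open>0 < \<eta>\<close> by auto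
  have "(\<lambda>k. cdf (M_seq k) y) \<longlonglongrightarrow> cdf M y" if "isCont (cdf M) y" for y
    using conv that unfolding weak_conv_m_def weak_conv_def by blast
  hence "eventually (\<lambda>k. dist (cdf (M_seq k) y) (cdf M y) < e / 2) sequentially"
    if "isCont (cdf M) y" for y
    using that \<open>0 < e\<close> by (intro tendstoD) auto
  hence "eventually (\<lambda>k. dist (cdf (M_seq k) a) (cdf M a) < e / 2) sequentially"
    "eventually (\<lambda>k. dist (cdf (M_seq k) b) (cdf M b) < e / 2) sequentially"
    using a(2) b(2) by blast+
  moreover have "eventually (\<lambda>k. a < c_seq k \<and> c_seq k < b) sequentially"
    using a b by (intro eventually_conj order_tendstoD[OF c_seq]) auto
  ultimately show "eventually (\<lambda>k. dist (cdf (M_seq k) (c_seq k)) (cdf M c) < e) sequentially"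
  proof eventually_elim
    case (elim k)
    have "cdf (M_seq k) a \<le> cdf (M_seq k) (c_seq k)" "cdf (M_seq k) (c_seq k) \<le> cdf (M_seq k) b"
      using elim(3) mono_cdf(2) by (auto simp: mono_def)
    moreover have "dist (cdf M a) (cdf M c) < e / 2" "dist (cdf M b) (cdf M c) < e / 2"
      using \<eta>[of a] \<eta>[of b] a(1) b(1) by (auto simp: dist_real_def)
    ultimately show ?case
      using elim(1,2) unfolding dist_real_def abs_less_iff by linarith
  qed
qed

section \<open>A central limit theorem for stratified indicator sums\<close>

lemma tendsto_power_one_minus_div:
  fixes N n :: "nat \<Rightarrow> nat"
  assumes N: "filterlim N at_top sequentially"
    and ratio: "(\<lambda>k. real (n k) / real (N k)) \<longlonglongrightarrow> l"
  shows "(\<lambda>k. (1 - c / real (N k)) ^ n k) \<longlonglongrightarrow> exp (- c * l)"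
proof -
  have "(\<lambda>k. (1 + (- c) / real (N k)) ^ N k) \<longlonglongrightarrow> exp (- c)"
    using filterlim_compose[OF tendsto_exp_limit_sequentially[of "- c"] N] by simp
  hence "(\<lambda>k. ((1 + (- c) / real (N k)) ^ N k) powr (real (n k) / real (N k))) \<longlonglongrightarrow> exp (- c) powr l"
    by (rule tendsto_powr[OF _ ratio]) simp
  moreover have "exp (- c) powr l = exp (- c * l)"
    by (simp add: powr_def mult.commute)
  moreover have "eventually (\<lambda>k. real (N k) > \<bar>c\<bar>) sequentially"
    using filterlim_compose[OF filterlim_real_sequentially N] by (simp add: filterlim_at_top_dense)
  hence "eventually (\<lambda>k. ((1 + (- c) / real (N k)) ^ N k) powr (real (n k) / real (N k))
                         = (1 - c / real (N k)) ^ n k) sequentially"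
  proof eventually_elim
    case (elim k)
    hence pos: "0 < 1 - c / real (N k)" and "0 < real (N k)"
      by (auto simp: field_simps abs_less_iff)
    hence "((1 - c / real (N k)) powr real (N k)) powr (real (n k) / real (N k))
             = (1 - c / real (N k)) powr real (n k)"
      by (simp add: powr_powr)
    thus ?case
      using pos by (simp add: powr_realpow)
  qed
  ultimately show ?thesis
    using tendsto_cong by fastforce
qed

lemma norm_prod_power_diff_le:
  fixes z w :: "'i \<Rightarrow> 'a::{real_normed_algebra_1, comm_monoid_mult}"
  assumes "\<And>i. i \<in> I \<Longrightarrow> norm (z i) \<le> 1" "\<And>i. i \<in> I \<Longrightarrow> norm (w i) \<le> 1"
    and "\<And>i. i \<in> I \<Longrightarrow> norm (z i - w i) \<le> e"
  shows "norm ((\<Prod>i\<in>I. z i ^ n i) - (\<Prod>i\<in>I. w i ^ n i)) \<le> (\<Sum>i\<in>I. real (n i)) * e"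
proof -
  have power_le: "norm (x ^ k) \<le> 1" if "norm x \<le> 1" for x :: 'a and k
    by (rule order_trans[OF norm_power_ineq power_le_one[OF norm_ge_zero that]])
  have "norm ((\<Prod>i\<in>I. z i ^ n i) - (\<Prod>i\<in>I. w i ^ n i)) \<le> (\<Sum>i\<in>I. norm (z i ^ n i - w i ^ n i))"
    using assms by (intro norm_prod_diff power_le)
  also have "\<dots> \<le> (\<Sum>i\<in>I. real (n i) * e)"
  proof (rule sum_mono)
    fix i assume "i \<in> I"
    hence "norm (z i ^ n i - w i ^ n i) \<le> real (n i) * norm (z i - w i)"
      using assms by (intro norm_power_diff) auto
    also have "\<dots> \<le> real (n i) * e"
      using assms \<open>i \<in> I\<close> by (intro mult_left_mono) auto
    finally show "norm (z i ^ n i - w i ^ n i) \<le> real (n i) * e" .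
  qed
  finally show ?thesis
    by (simp add: sum_distrib_right)
qed

lemma norm_prod_centred_bernoulli_char_diff_le:
  assumes p: "\<And>r. r \<in> R \<Longrightarrow> 0 \<le> p r \<and> p r \<le> 1" and u: "u\<^sup>2 \<le> 1"
  shows "norm ((\<Prod>r\<in>R. centred_bernoulli_char (p r) u ^ n r)
                - (\<Prod>r\<in>R. complex_of_real (1 - u\<^sup>2 * (p r * (1 - p r)) / 2) ^ n r))
           \<le> (\<Sum>r\<in>R. real (n r)) * (\<bar>u\<bar> ^ 3 / 6)"
proof (rule norm_prod_power_diff_le)
  fix r assume r: "r \<in> R"
  show "norm (centred_bernoulli_char (p r) u) \<le> 1"
    using p[OF r] by (intro norm_centred_bernoulli_char_le_1) auto
  have "0 \<le> p r * (1 - p r)" "p r * (1 - p r) \<le> 1"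
    using p[OF r] by (auto intro: mult_le_one)
  thus "norm (complex_of_real (1 - u\<^sup>2 * (p r * (1 - p r)) / 2)) \<le> 1"
    using u mult_le_one[of "u\<^sup>2" "p r * (1 - p r)"]
    unfolding norm_of_real by (simp del: of_real_diff of_real_mult of_real_divide of_real_power)
  show "norm (centred_bernoulli_char (p r) u - complex_of_real (1 - u\<^sup>2 * (p r * (1 - p r)) / 2))
          \<le> \<bar>u\<bar> ^ 3 / 6"
    using p[OF r] by (intro centred_bernoulli_char_taylor) auto
qed

text \<open>With \<open>u = s / sqrt N\<close> the bound above is \<open>N |u|^3 / 6 = |s|^3 / (6 sqrt N)\<close>, while the
  Taylor products converge by \<open>(1 - c / N)^n \<longrightarrow> exp (- c \<lambda>)\<close>.\<close>

lemma stratified_char_tendsto: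
  fixes n :: "nat \<Rightarrow> 'r \<Rightarrow> nat" and R :: "'r set"
  defines "N k \<equiv> \<Sum>r\<in>R. n k r"
  assumes R: "finite R" and p: "\<And>r. r \<in> R \<Longrightarrow> 0 \<le> p r \<and> p r \<le> 1"
    and N_tendsto: "filterlim N at_top sequentially"
    and ratio: "\<And>r. r \<in> R \<Longrightarrow> (\<lambda>k. real (n k r) / real (N k)) \<longlonglongrightarrow> lam r"
  shows "(\<lambda>k. \<Prod>r\<in>R. centred_bernoulli_char (p r) (s / sqrt (real (N k))) ^ n k r)
           \<longlonglongrightarrow> exp (- (s\<^sup>2 * (\<Sum>r\<in>R. lam r * (p r * (1 - p r)))) / 2)"
proof -
  define v where "v r = p r * (1 - p r)" for r
  define u where "u k = s / sqrt (real (N k))" for k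
  define B where "B k = (\<Prod>r\<in>R. (1 - (s\<^sup>2 * v r / 2) / real (N k)) ^ n k r)" for k
  have "B \<longlonglongrightarrow> (\<Prod>r\<in>R. exp (- (s\<^sup>2 * v r / 2) * lam r))"
    unfolding B_def by (intro tendsto_prod tendsto_power_one_minus_div N_tendsto ratio)
  also have "(\<Prod>r\<in>R. exp (- (s\<^sup>2 * v r / 2) * lam r)) = exp (- (s\<^sup>2 * (\<Sum>r\<in>R. lam r * v r)) / 2)"
    using R by (simp add: exp_sum[symmetric] sum_distrib_left sum_divide_distrib[symmetric] sum_negf[symmetric]
        algebra_simps)
  finally have B: "(\<lambda>k. complex_of_real (B k)) \<longlonglongrightarrow> exp (- (s\<^sup>2 * (\<Sum>r\<in>R. lam r * v r)) / 2)"
    by (rule tendsto_of_real)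
  have "eventually (\<lambda>k. s\<^sup>2 + 1 \<le> real (N k)) sequentially"
    using filterlim_compose[OF filterlim_real_sequentially N_tendsto] by (simp add: filterlim_at_top)
  hence "eventually (\<lambda>k. norm ((\<Prod>r\<in>R. centred_bernoulli_char (p r) (u k) ^ n k r) - B k)
                         \<le> \<bar>s\<bar> ^ 3 / 6 / sqrt (real (N k))) sequentially"
  proof eventually_elim
    case (elim k)
    have N_pos: "0 < real (N k)"
      using elim by (smt (verit) zero_le_power2)
    hence u2: "(u k)\<^sup>2 = s\<^sup>2 / real (N k)" and "(u k)\<^sup>2 \<le> 1"
      using elim by (simp_all add: u_def power_divide)
    have "complex_of_real (B k) = (\<Prod>r\<in>R. complex_of_real (1 - (u k)\<^sup>2 * v r / 2) ^ n k r)"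
      unfolding B_def u2 by (simp add: field_simps)
    hence "norm ((\<Prod>r\<in>R. centred_bernoulli_char (p r) (u k) ^ n k r) - B k)
             = norm ((\<Prod>r\<in>R. centred_bernoulli_char (p r) (u k) ^ n k r)
                     - (\<Prod>r\<in>R. complex_of_real (1 - (u k)\<^sup>2 * (p r * (1 - p r)) / 2) ^ n k r))"
      by (simp add: v_def)
    also have "\<dots> \<le> real (N k) * (\<bar>u k\<bar> ^ 3 / 6)"
      unfolding N_def of_nat_sum using p \<open>(u k)\<^sup>2 \<le> 1\<close>
      by (rule norm_prod_centred_bernoulli_char_diff_le)
    also have "\<dots> = \<bar>s\<bar> ^ 3 / 6 / sqrt (real (N k))"
      using N_pos by (simp add: u_def abs_div power_divide power3_eq_cube field_simps)
    finally show ?case .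
  qed
  moreover have "(\<lambda>k. \<bar>s\<bar> ^ 3 / 6 / sqrt (real (N k))) \<longlonglongrightarrow> 0"
    using filterlim_compose[OF sqrt_at_top filterlim_compose[OF filterlim_real_sequentially N_tendsto]]
    by (intro tendsto_divide_0[OF tendsto_const] filterlim_at_top_imp_at_infinity)
  ultimately have "(\<lambda>k. (\<Prod>r\<in>R. centred_bernoulli_char (p r) (u k) ^ n k r) - B k) \<longlonglongrightarrow> 0"
    by (rule Lim_null_comparison)
  from tendsto_add[OF B this] show ?thesis
    by (simp add: u_def v_def)
qed

lemma (in prob_space) char_stratified_centred_sum:
  fixes Y :: "'r \<Rightarrow> nat \<Rightarrow> 'a \<Rightarrow> real"
  assumes R: "finite R"
    and indep: "indep_vars (\<lambda>_. borel) (\<lambda>(r, j). Y r j) {(r, j). r \<in> R \<and> j < n r}"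
    and p: "\<And>r j. r \<in> R \<Longrightarrow> j < n r \<Longrightarrow> prob {\<omega> \<in> space M. Y r j \<omega> \<le> t} = p r"
  shows "char (distr M borel (\<lambda>\<omega>. \<Sum>r\<in>R. \<Sum>j<n r. ((if Y r j \<omega> \<le> t then 1 else 0) - p r) / c)) s
           = (\<Prod>r\<in>R. centred_bernoulli_char (p r) (s / c) ^ n r)"
proof -
  define I where "I = Sigma R (\<lambda>r. {..<n r})"
  have "I = {(r, j). r \<in> R \<and> j < n r}"
    unfolding I_def by auto
  hence indep_I: "indep_vars (\<lambda>_. borel) (\<lambda>i. Y (fst i) (snd i)) I"
    using indep by (simp add: split_beta')
  have "(\<lambda>\<omega>. \<Sum>r\<in>R. \<Sum>j<n r. ((if Y r j \<omega> \<le> t then 1 else 0) - p r) / c)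
          = (\<lambda>\<omega>. \<Sum>i\<in>I. ((if Y (fst i) (snd i) \<omega> \<le> t then 1 else 0) - p (fst i)) / c)"
    unfolding I_def using R by (subst sum.Sigma) (auto simp: split_beta')
  moreover have "char (distr M borel (\<lambda>\<omega>. \<Sum>i\<in>I. ((if Y (fst i) (snd i) \<omega> \<le> t then 1 else 0) - p (fst i)) / c)) s
                   = (\<Prod>i\<in>I. centred_bernoulli_char (p (fst i)) (s / c))"
    using p by (intro char_sum_centred_indicators[OF indep_I]) (auto simp: I_def)
  moreover have "(\<Prod>i\<in>I. centred_bernoulli_char (p (fst i)) (s / c))
                   = (\<Prod>r\<in>R. centred_bernoulli_char (p r) (s / c) ^ n r)"
    using R prod.Sigma[of R "\<lambda>r. {..<n r}" "\<lambda>r _. centred_bernoulli_char (p r) (s / c)"]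
    unfolding I_def by (simp add: split_beta')
  ultimately show ?thesis
    by simp
qed

lemma stratified_indicator_clt:
  fixes R :: "'r set" and \<Omega> :: "nat \<Rightarrow> 'a measure" and Y :: "nat \<Rightarrow> 'r \<Rightarrow> nat \<Rightarrow> 'a \<Rightarrow> real"
    and nr :: "nat \<Rightarrow> 'r \<Rightarrow> nat" and lam p :: "'r \<Rightarrow> real"
  defines "N k \<equiv> \<Sum>r\<in>R. nr k r"
  assumes R: "finite R"
    and prob: "\<And>k. prob_space (\<Omega> k)"
    and indep: "\<And>k. prob_space.indep_vars (\<Omega> k) (\<lambda>_. borel) (\<lambda>(r, j). Y k r j)
                       {(r, j). r \<in> R \<and> j < nr k r}"
    and p: "\<And>k r j. r \<in> R \<Longrightarrow> j < nr k r \<Longrightarrow>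
              measure (\<Omega> k) {\<omega> \<in> space (\<Omega> k). Y k r j \<omega> \<le> t} = p r"
    and p_unit: "\<And>r. r \<in> R \<Longrightarrow> 0 \<le> p r \<and> p r \<le> 1"
    and N_tendsto: "filterlim N at_top sequentially"
    and ratio: "\<And>r. r \<in> R \<Longrightarrow> (\<lambda>k. real (nr k r) / real (N k)) \<longlonglongrightarrow> lam r"
    and lam: "\<And>r. r \<in> R \<Longrightarrow> 0 \<le> lam r"
  shows "weak_conv_m
           (\<lambda>k. distr (\<Omega> k) borel
              (\<lambda>\<omega>. \<Sum>r\<in>R. \<Sum>j<nr k r. ((if Y k r j \<omega> \<le> t then 1 else 0) - p r) / sqrt (real (N k))))
           (normal_var (\<Sum>r\<in>R. lam r * (p r * (1 - p r))))"
proof (rule levy_continuity)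
  fix k
  have "Y k r j \<in> borel_measurable (\<Omega> k)" if "r \<in> R" "j < nr k r" for r j
    using indep[of k] that unfolding prob_space.indep_vars_def2[OF prob] by auto
  hence "(\<lambda>\<omega>. \<Sum>r\<in>R. \<Sum>j<nr k r. ((if Y k r j \<omega> \<le> t then 1 else 0) - p r) / sqrt (real (N k)))
           \<in> borel_measurable (\<Omega> k)"
    by (intro borel_measurable_sum) (measurable, auto)
  thus "real_distribution (distr (\<Omega> k) borel
          (\<lambda>\<omega>. \<Sum>r\<in>R. \<Sum>j<nr k r. ((if Y k r j \<omega> \<le> t then 1 else 0) - p r) / sqrt (real (N k))))"
    by (rule prob_space.real_distribution_distr[OF prob])
next
  have V: "0 \<le> (\<Sum>r\<in>R. lam r * (p r * (1 - p r)))"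
    using p_unit lam by (intro sum_nonneg mult_nonneg_nonneg) auto
  thus "real_distribution (normal_var (\<Sum>r\<in>R. lam r * (p r * (1 - p r))))"
    by (rule real_distribution_normal_var)
  fix s
  have "char (distr (\<Omega> k) borel
          (\<lambda>\<omega>. \<Sum>r\<in>R. \<Sum>j<nr k r. ((if Y k r j \<omega> \<le> t then 1 else 0) - p r) / sqrt (real (N k)))) s
          = (\<Prod>r\<in>R. centred_bernoulli_char (p r) (s / sqrt (real (N k))) ^ nr k r)" for k
    by (rule prob_space.char_stratified_centred_sum[OF prob R indep]) (rule p)
  moreover have "(\<lambda>k. \<Prod>r\<in>R. centred_bernoulli_char (p r) (s / sqrt (real (N k))) ^ nr k r)
                   \<longlonglongrightarrow> exp (- (s\<^sup>2 * (\<Sum>r\<in>R. lam r * (p r * (1 - p r)))) / 2)"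
    using R p_unit N_tendsto ratio unfolding N_def by (rule stratified_char_tendsto)
  ultimately show "(\<lambda>k. char (distr (\<Omega> k) borel
          (\<lambda>\<omega>. \<Sum>r\<in>R. \<Sum>j<nr k r. ((if Y k r j \<omega> \<le> t then 1 else 0) - p r) / sqrt (real (N k)))) s)
          \<longlonglongrightarrow> char (normal_var (\<Sum>r\<in>R. lam r * (p r * (1 - p r)))) s"
    by (simp add: char_normal_var[OF V] mult.commute)
qed

section \<open>The MinPNS estimator\<close>

text \<open>Compared with the hypotheses of the theorem, the stratum laws enter only through their value
  at t, only the total sample size has to grow, and neither right-continuity of F nor
  \<lambda>_r < 1 or \<Sum>_r \<lambda>_r = 1 is needed.\<close>

locale minpns_sample =
  fixes m :: nat and F :: "real \<Rightarrow> real" and t :: real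
    and \<Omega> :: "nat \<Rightarrow> 'a measure" and Y :: "nat \<Rightarrow> nat \<Rightarrow> nat \<Rightarrow> 'a \<Rightarrow> real"
    and nr :: "nat \<Rightarrow> nat \<Rightarrow> nat" and lam :: "nat \<Rightarrow> real"
  assumes m: "1 \<le> m"
    and F_mono: "mono F" and F_bot: "(F \<longlongrightarrow> 0) at_bot" and F_top: "(F \<longlongrightarrow> 1) at_top"
    and prob: "\<And>k. prob_space (\<Omega> k)"
    and indep: "\<And>k. prob_space.indep_vars (\<Omega> k) (\<lambda>_. borel) (\<lambda>(r, j). Y k r j)
                       {(r, j). r \<in> {1..m} \<and> j < nr k r}"
    and distrib_t: "\<And>k r j. r \<in> {1..m} \<Longrightarrow> j < nr k r \<Longrightarrow>
                     measure (\<Omega> k) {\<omega> \<in> space (\<Omega> k). Y k r j \<omega> \<le> t} = Fstrat m F r t"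
    and total_tendsto: "filterlim (\<lambda>k. \<Sum>r=1..m. nr k r) at_top sequentially"
    and ratio: "\<And>r. r \<in> {1..m} \<Longrightarrow> (\<lambda>k. real (nr k r) / real (\<Sum>r=1..m. nr k r)) \<longlonglongrightarrow> lam r"
    and lam_pos: "\<And>r. r \<in> {1..m} \<Longrightarrow> 0 < lam r"
begin

definition total :: "nat \<Rightarrow> nat" where
  "total k = (\<Sum>r=1..m. nr k r)"

definition weights :: "nat \<Rightarrow> nat \<Rightarrow> real" where
  "weights k r = real (nr k r) / real (total k)"

definition ecdf :: "nat \<Rightarrow> 'a \<Rightarrow> real" where
  "ecdf k \<omega> = (1 / real (total k)) * (\<Sum>r=1..m. \<Sum>j<nr k r. if Y k r j \<omega> \<le> t then 1 else 0)"

definition estimator :: "nat \<Rightarrow> 'a \<Rightarrow> real" where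
  "estimator k \<omega> = the_inv_into {0..1} (gmix m (weights k)) (ecdf k \<omega>)"

definition scaled_error :: "nat \<Rightarrow> 'a \<Rightarrow> real" where
  "scaled_error k \<omega> = sqrt (real (total k)) * (estimator k \<omega> - F t)"

definition standardized_ecdf :: "nat \<Rightarrow> 'a \<Rightarrow> real" where
  "standardized_ecdf k \<omega> = sqrt (real (total k)) * (ecdf k \<omega> - gmix m (weights k) (F t))"

definition level :: "nat \<Rightarrow> real \<Rightarrow> real" where
  "level k x = F t + x / sqrt (real (total k))"

definition threshold :: "nat \<Rightarrow> real \<Rightarrow> real" where
  "threshold k x = sqrt (real (total k)) * (gmix m (weights k) (level k x) - gmix m (weights k) (F t))"

definition asym_var :: real where
  "asym_var = (\<Sum>r=1..m. lam r * (Fstrat m F r t * (1 - Fstrat m F r t)))"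

definition slope :: real where
  "slope = (\<Sum>r=1..m. lam r * strat_density m r (F t))"

lemma F_in_unit: "0 \<le> F x \<and> F x \<le> 1"
proof
  have "eventually (\<lambda>y. F y \<le> F x) at_bot"
    using eventually_le_at_bot[of x] by eventually_elim (use F_mono in \<open>auto simp: mono_def\<close>)
  thus "0 \<le> F x"
    using F_bot by (intro tendsto_upperbound) auto
  have "eventually (\<lambda>y. F x \<le> F y) at_top"
    using eventually_ge_at_top[of x] by eventually_elim (use F_mono in \<open>auto simp: mono_def\<close>)
  thus "F x \<le> 1"
    using F_top by (intro tendsto_lowerbound) auto
qed

lemma Fstrat_t_in_unit: "r \<in> {1..m} \<Longrightarrow> 0 \<le> Fstrat m F r t \<and> Fstrat m F r t \<le> 1"
  using F_in_unit[of t] strat_cdf_in_unit[of r m "F t"] by (simp add: Fstrat_eq_strat_cdf)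

lemma Y_measurable: "r \<in> {1..m} \<Longrightarrow> j < nr k r \<Longrightarrow> Y k r j \<in> borel_measurable (\<Omega> k)"
  using indep[of k] unfolding prob_space.indep_vars_def2[OF prob] by auto

lemma eventually_total_pos: "eventually (\<lambda>k. 0 < total k) sequentially"
proof -
  have "eventually (\<lambda>k. 1 \<le> total k) sequentially"
    using total_tendsto unfolding total_def[symmetric] filterlim_at_top by blast
  thus ?thesis
    by eventually_elim simp
qed

lemma sqrt_total_tendsto: "filterlim (\<lambda>k. sqrt (real (total k))) at_top sequentially"
  using filterlim_compose[OF sqrt_at_top filterlim_compose[OF filterlim_real_sequentially total_tendsto]]
  by (simp add: total_def)

lemma exists_positive_weight:
  assumes "0 < total k"
  obtains r0 where "r0 \<in> {1..m}" "0 < weights k r0"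
proof -
  have "\<not> (\<forall>r\<in>{1..m}. nr k r = 0)"
    using assms unfolding total_def by (metis less_irrefl sum.neutral)
  then obtain r0 where "r0 \<in> {1..m}" "0 < nr k r0"
    by auto
  thus ?thesis
    using assms that by (simp add: weights_def)
qed

lemma strict_mono_on_gmix_weights:
  assumes "0 < total k"
  shows "strict_mono_on {0..1} (gmix m (weights k))"
proof -
  obtain r0 where "r0 \<in> {1..m}" "0 < weights k r0"
    using exists_positive_weight[OF assms] .
  thus ?thesis
    by (intro strict_mono_on_gmix[of m _ r0]) (auto simp: weights_def)
qed

lemma bij_betw_gmix_weights:
  assumes "0 < total k"
  shows "bij_betw (gmix m (weights k)) {0..1} {0..1}"
proof -
  have "(\<Sum>r=1..m. weights k r) = real (total k) / real (total k)"
    unfolding weights_def sum_divide_distrib[symmetric] by (simp add: total_def)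
  hence "(\<Sum>r=1..m. weights k r) = 1"
    using assms by simp
  moreover obtain r0 where "r0 \<in> {1..m}" "0 < weights k r0"
    using exists_positive_weight[OF assms] .
  ultimately show ?thesis
    by (intro bij_betw_gmix[of m _ r0]) (auto simp: weights_def)
qed

lemma ecdf_in_unit:
  assumes "0 < total k"
  shows "ecdf k \<omega> \<in> {0..1}"
proof -
  define S where "S = (\<Sum>r=1..m. \<Sum>j<nr k r. if Y k r j \<omega> \<le> t then 1 else (0::real))"
  have "0 \<le> S"
    unfolding S_def by (intro sum_nonneg) auto
  moreover have "S \<le> (\<Sum>r=1..m. \<Sum>j<nr k r. 1)"
    unfolding S_def by (intro sum_mono) auto
  hence "S \<le> real (total k)"
    by (simp add: total_def)
  moreover have "ecdf k \<omega> = S / real (total k)"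
    by (simp add: ecdf_def S_def)
  ultimately show ?thesis
    using assms by simp
qed

lemma
  assumes "0 < total k"
  shows estimator_in_unit: "estimator k \<omega> \<in> {0..1}"
    and gmix_estimator: "gmix m (weights k) (estimator k \<omega>) = ecdf k \<omega>"
proof -
  have bij: "bij_betw (gmix m (weights k)) {0..1} {0..1}"
    using assms by (rule bij_betw_gmix_weights)
  show "estimator k \<omega> \<in> {0..1}"
    unfolding estimator_def using bij_betw_apply[OF bij_betw_the_inv_into[OF bij] ecdf_in_unit[OF assms]] .
  show "gmix m (weights k) (estimator k \<omega>) = ecdf k \<omega>"
    unfolding estimator_def using f_the_inv_into_f_bij_betw[OF bij] ecdf_in_unit[OF assms] by blast
qed

lemma estimator_le_iff:
  assumes "0 < total k" "b \<in> {0..1}"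
  shows "estimator k \<omega> \<le> b \<longleftrightarrow> ecdf k \<omega> \<le> gmix m (weights k) b"
  using strict_mono_on_less_eq[OF strict_mono_on_gmix_weights estimator_in_unit] gmix_estimator assms
  by metis

lemma standardized_ecdf_eq_sum:
  "standardized_ecdf k \<omega> = (\<Sum>r=1..m. \<Sum>j<nr k r.
     ((if Y k r j \<omega> \<le> t then 1 else 0) - Fstrat m F r t) / sqrt (real (total k)))"
proof -
  define S where "S = (\<Sum>r=1..m. \<Sum>j<nr k r. if Y k r j \<omega> \<le> t then 1 else (0::real))"
  define P where "P = (\<Sum>r=1..m. real (nr k r) * Fstrat m F r t)"
  have "gmix m (weights k) (F t) = P / real (total k)"
    by (simp add: gmix_eq_sum_strat_cdf weights_def P_def Fstrat_eq_strat_cdf sum_divide_distrib)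
  hence "standardized_ecdf k \<omega> = sqrt (real (total k)) * ((S - P) / real (total k))"
    by (simp add: standardized_ecdf_def ecdf_def S_def diff_divide_distrib)
  also have "\<dots> = (S - P) / sqrt (real (total k))"
    by (cases "total k = 0") (simp_all add: field_simps real_sqrt_mult[symmetric])
  also have "\<dots> = (\<Sum>r=1..m. \<Sum>j<nr k r.
                    ((if Y k r j \<omega> \<le> t then 1 else 0) - Fstrat m F r t) / sqrt (real (total k)))"
    by (simp add: S_def P_def sum_subtractf sum_divide_distrib[symmetric])
  finally show ?thesis .
qed

lemma standardized_ecdf_measurable: "standardized_ecdf k \<in> borel_measurable (\<Omega> k)"
proof -
  have "(\<lambda>\<omega>. ((if Y k r j \<omega> \<le> t then 1 else 0) - Fstrat m F r t) / sqrt (real (total k)))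
          \<in> borel_measurable (\<Omega> k)" if "r \<in> {1..m}" "j < nr k r" for r j
    using Y_measurable[OF that] by measurable
  thus ?thesis
    unfolding standardized_ecdf_eq_sum[abs_def] by (intro borel_measurable_sum) auto
qed

lemma standardized_ecdf_weak_conv:
  "weak_conv_m (\<lambda>k. distr (\<Omega> k) borel (standardized_ecdf k)) (normal_var asym_var)"
  using stratified_indicator_clt[OF _ prob indep distrib_t Fstrat_t_in_unit total_tendsto ratio]
    lam_pos
  unfolding standardized_ecdf_eq_sum[abs_def] asym_var_def total_def by fastforce

lemma scaled_error_le_iff:
  assumes "0 < total k"
  shows "scaled_error k \<omega> \<le> x
           \<longleftrightarrow> 0 \<le> level k x \<and> (1 \<le> level k x \<or> standardized_ecdf k \<omega> \<le> threshold k x)"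
proof -
  define b where "b = level k x"
  have sqrt_pos: "0 < sqrt (real (total k))"
    using assms by simp
  hence "scaled_error k \<omega> \<le> x \<longleftrightarrow> estimator k \<omega> \<le> b"
    by (simp add: scaled_error_def b_def level_def field_simps)
  also have "\<dots> \<longleftrightarrow> 0 \<le> b \<and> (1 \<le> b \<or> ecdf k \<omega> \<le> gmix m (weights k) b)"
  proof (cases "b < 0 \<or> 1 \<le> b")
    case True
    thus ?thesis
      using estimator_in_unit[OF assms(1), of \<omega>] by auto
  next
    case False
    thus ?thesis
      using estimator_le_iff[OF assms(1), of b \<omega>] by auto
  qed
  also have "ecdf k \<omega> \<le> gmix m (weights k) b \<longleftrightarrow> standardized_ecdf k \<omega> \<le> threshold k x"
    using sqrt_pos by (simp add: standardized_ecdf_def threshold_def b_def)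
  finally show ?thesis
    by (simp only: b_def)
qed

lemma cdf_scaled_error:
  assumes "0 < total k"
  shows "cdf (distr (\<Omega> k) borel (scaled_error k)) x
           = (if level k x < 0 then 0 else if 1 \<le> level k x then 1
              else cdf (distr (\<Omega> k) borel (standardized_ecdf k)) (threshold k x))"
proof -
  note standardized_ecdf_measurable[measurable]
  have "scaled_error k \<in> borel_measurable (\<Omega> k)"
    unfolding borel_measurable_iff_le scaled_error_le_iff[OF assms(1)] by measurable
  thus ?thesis
    using prob_space.prob_space[OF prob]
    unfolding cdf_def
    by (simp add: measure_distr vimage_def Int_def conj_commute scaled_error_le_iff[OF assms(1)])
qed

lemma threshold_tendsto: "(\<lambda>k. threshold k x) \<longlonglongrightarrow> x * slope"
proof -
  have "threshold k x = (\<Sum>r=1..m. weights k r * (sqrt (real (total k)) *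
          (strat_cdf m r (F t + x / sqrt (real (total k))) - strat_cdf m r (F t))))" for k
    by (simp add: threshold_def level_def gmix_eq_sum_strat_cdf sum_distrib_left sum_subtractf[symmetric]
        algebra_simps)
  moreover have "(\<lambda>k. \<Sum>r=1..m. weights k r * (sqrt (real (total k)) *
          (strat_cdf m r (F t + x / sqrt (real (total k))) - strat_cdf m r (F t))))
          \<longlonglongrightarrow> (\<Sum>r=1..m. lam r * (x * strat_density m r (F t)))"
    using ratio unfolding weights_def total_def
    by (intro tendsto_sum tendsto_mult DERIV_scaled_increment_tendsto strat_cdf_has_real_derivative
        sqrt_total_tendsto[unfolded total_def])
  ultimately show ?thesis
    by (simp add: slope_def sum_distrib_left algebra_simps)
qed

lemma slope_pos: "0 < slope"
proof -
  have "0 < lam m * strat_density m m (F t)"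
    using lam_pos[of m] m F_in_unit[of t] by (intro mult_pos_pos strat_density_pos) auto
  also have "\<dots> \<le> slope"
    unfolding slope_def using m lam_pos F_in_unit[of t]
    by (intro member_le_sum) (auto simp: less_imp_le intro!: mult_nonneg_nonneg strat_density_nonneg)
  finally show ?thesis .
qed

lemma deriv_gmix_lam: "deriv (gmix m lam) (F t) = slope"
  unfolding slope_def using gmix_has_real_derivative by (rule DERIV_imp_deriv)

lemma asym_var_nonneg: "0 \<le> asym_var"
  unfolding asym_var_def using lam_pos Fstrat_t_in_unit
  by (intro sum_nonneg mult_nonneg_nonneg) (auto simp: less_imp_le)

lemma asym_var_eq_0: "F t = 0 \<or> F t = 1 \<Longrightarrow> asym_var = 0"
  unfolding asym_var_def Fstrat_eq_strat_cdf
  by (intro sum.neutral) (auto simp: strat_cdf_0 strat_cdf_1)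

lemma level_tendsto: "(\<lambda>k. level k x) \<longlonglongrightarrow> F t"
  unfolding level_def using tendsto_add[OF tendsto_const tendsto_divide_0[OF tendsto_const
      filterlim_at_top_imp_at_infinity[OF sqrt_total_tendsto]]]
  by simp

lemma eventually_level_in_unit:
  assumes "\<not> (F t = 0 \<and> x < 0 \<or> F t = 1 \<and> 0 \<le> x)"
  shows "eventually (\<lambda>k. 0 \<le> level k x \<and> level k x < 1) sequentially"
proof -
  have "eventually (\<lambda>k. 0 \<le> level k x) sequentially"
  proof (cases "F t = 0")
    case True
    thus ?thesis using assms by (simp add: level_def)
  next
    case False
    hence "0 < F t" using F_in_unit[of t] by simp
    with order_tendstoD(1)[OF level_tendsto, of 0 x] show ?thesis
      by (auto elim: eventually_mono)
  qed
  moreover have "eventually (\<lambda>k. level k x < 1) sequentially"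
  proof (cases "F t = 1")
    case True
    thus ?thesis
      using assms eventually_total_pos by (auto elim: eventually_mono simp: level_def divide_neg_pos)
  next
    case False
    hence "F t < 1" using F_in_unit[of t] by simp
    with order_tendstoD(2)[OF level_tendsto, of 1 x] show ?thesis
      by simp
  qed
  ultimately show ?thesis
    by (rule eventually_conj)
qed

text \<open>If \<open>F t \<in> {0, 1}\<close> the asymptotic variance vanishes, and since the estimator takes values in
  \<open>[0,1]\<close>, the event \<open>scaled_error k \<le> x\<close> is empty or certain for \<open>x\<close> on the far side of \<open>0\<close>.\<close>

lemma cdf_scaled_error_degenerate:
  assumes "F t = 0 \<and> x < 0 \<or> F t = 1 \<and> 0 \<le> x"
  shows "eventually (\<lambda>k. cdf (distr (\<Omega> k) borel (scaled_error k)) x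
                         = cdf (normal_var (asym_var / slope\<^sup>2)) x) sequentially"
  using eventually_total_pos
proof eventually_elim
  case (elim k)
  have "asym_var = 0"
    using assms by (intro asym_var_eq_0) auto
  hence target: "cdf (normal_var (asym_var / slope\<^sup>2)) x = (if 0 \<le> x then 1 else 0)"
    using slope_pos by (simp add: cdf_normal_var_0)
  have sqrt_pos: "0 < sqrt (real (total k))"
    using elim by simp
  from assms show ?case
  proof (elim disjE conjE)
    assume "F t = 0" "x < 0"
    thus ?case
      using sqrt_pos elim by (simp add: cdf_scaled_error level_def target divide_neg_pos)
  next
    assume "F t = 1" "0 \<le> x"
    hence "1 \<le> level k x"
      by (simp add: level_def)
    thus ?case
      unfolding cdf_scaled_error[OF elim] target using \<open>0 \<le> x\<close> by simp
  qed
qed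

lemma scaled_error_weak_conv:
  "weak_conv_m (\<lambda>k. distr (\<Omega> k) borel (scaled_error k)) (normal_var (asym_var / slope\<^sup>2))"
  unfolding weak_conv_m_def weak_conv_def
proof (intro allI impI)
  fix x assume cont: "isCont (cdf (normal_var (asym_var / slope\<^sup>2))) x"
  show "(\<lambda>k. cdf (distr (\<Omega> k) borel (scaled_error k)) x) \<longlonglongrightarrow> cdf (normal_var (asym_var / slope\<^sup>2)) x"
  proof (cases "F t = 0 \<and> x < 0 \<or> F t = 1 \<and> 0 \<le> x")
    case True
    thus ?thesis
      by (rule tendsto_eventually[OF cdf_scaled_error_degenerate])
  next
    case False
    define \<Phi> where "\<Phi> = cdf (normal_var asym_var)"
    have target: "cdf (normal_var (asym_var / slope\<^sup>2)) = (\<lambda>y. \<Phi> (y * slope))"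
      using cdf_normal_var_divide[OF asym_var_nonneg slope_pos] by (simp add: \<Phi>_def fun_eq_iff)
    have "isCont (\<lambda>y. \<Phi> (y * slope)) (x * slope / slope)"
      using cont slope_pos unfolding target by simp
    moreover have "isCont (\<lambda>z. z / slope) (x * slope)"
      using slope_pos by (intro continuous_intros) simp
    ultimately have "isCont \<Phi> (x * slope)"
      using isCont_o2[where f = "\<lambda>z. z / slope" and a = "x * slope" and g = "\<lambda>y. \<Phi> (y * slope)"]
        slope_pos by simp
    hence "(\<lambda>k. cdf (distr (\<Omega> k) borel (standardized_ecdf k)) (threshold k x)) \<longlonglongrightarrow> \<Phi> (x * slope)"
      unfolding \<Phi>_def
      by (intro weak_conv_m_cdf_tendsto[OF standardized_ecdf_weak_conv] threshold_tendsto
          prob_space.real_distribution_distr[OF prob standardized_ecdf_measurable]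
          real_distribution_normal_var asym_var_nonneg)
    moreover have "eventually (\<lambda>k. cdf (distr (\<Omega> k) borel (standardized_ecdf k)) (threshold k x)
                                   = cdf (distr (\<Omega> k) borel (scaled_error k)) x) sequentially"
      using eventually_level_in_unit[OF False] eventually_total_pos
      by eventually_elim (simp add: cdf_scaled_error)
    ultimately show ?thesis
      unfolding target by (rule Lim_transform_eventually)
  qed
qed

end

theorem theorem1:
  fixes m :: nat and F :: "real \<Rightarrow> real" and t :: real
    and \<Omega> :: "nat \<Rightarrow> 'a measure"
    and Y :: "nat \<Rightarrow> nat \<Rightarrow> nat \<Rightarrow> 'a \<Rightarrow> real"
    and nr :: "nat \<Rightarrow> nat \<Rightarrow> nat"
    and lam :: "nat \<Rightarrow> real"
  defines "N \<equiv> (\<lambda>k. \<Sum>r=1..m. nr k r)"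
  defines "Fn \<equiv> (\<lambda>k \<omega>. (1 / real (N k)) *
              (\<Sum>r=1..m. \<Sum>j<nr k r. if Y k r j \<omega> \<le> t then 1 else 0))"
  defines "gn \<equiv> (\<lambda>k. gmix m (\<lambda>r. real (nr k r) / real (N k)))"
  defines "Fmb \<equiv> (\<lambda>k \<omega>. the_inv_into {0..1} (gn k) (Fn k \<omega>))"
  defines "g \<equiv> gmix m lam"
  defines "\<sigma>2 \<equiv> (\<Sum>r=1..m. lam r * Fstrat m F r t * (1 - Fstrat m F r t)) / (deriv g (F t))\<^sup>2"
  assumes m: "m \<ge> 1"
    and F_mono: "mono F"
    and F_rcont: "\<And>x. continuous (at_right x) F"
    and F_bot: "(F \<longlongrightarrow> 0) at_bot"
    and F_top: "(F \<longlongrightarrow> 1) at_top"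
    and prob: "\<And>k. prob_space (\<Omega> k)"
    and indep: "\<And>k. prob_space.indep_vars (\<Omega> k) (\<lambda>_. borel) (\<lambda>(r, j). Y k r j)
                       {(r, j). r \<in> {1..m} \<and> j < nr k r}"
    and distrib: "\<And>k r j s. r \<in> {1..m} \<Longrightarrow> j < nr k r \<Longrightarrow>
                   measure (\<Omega> k) {\<omega> \<in> space (\<Omega> k). Y k r j \<omega> \<le> s} = Fstrat m F r s"
    and nr_inf: "\<And>r. r \<in> {1..m} \<Longrightarrow> filterlim (\<lambda>k. nr k r) at_top sequentially"
    and ratio: "\<And>r. r \<in> {1..m} \<Longrightarrow> (\<lambda>k. real (nr k r) / real (N k)) \<longlonglongrightarrow> lam r"
    and lam_pos: "\<And>r. r \<in> {1..m} \<Longrightarrow> 0 < lam r \<and> lam r < 1"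
    and lam_sum: "(\<Sum>r=1..m. lam r) = 1"
  shows "weak_conv_m (\<lambda>k. distr (\<Omega> k) borel (\<lambda>\<omega>. sqrt (real (N k)) * (Fmb k \<omega> - F t)))
           (normal_var \<sigma>2)"
proof -
  interpret minpns_sample m F t \<Omega> Y nr lam
  proof (rule minpns_sample.intro)
    show "filterlim (\<lambda>k. \<Sum>r=1..m. nr k r) at_top sequentially"
    proof (rule filterlim_at_top_mono[OF nr_inf[of 1]])
      show "eventually (\<lambda>k. nr k 1 \<le> (\<Sum>r=1..m. nr k r)) sequentially"
        using m by (intro always_eventually allI member_le_sum) auto
    qed (use m in simp)
  qed (use assms in \<open>simp_all add: N_def\<close>)
  have "N = total"
    by (simp add: N_def total_def fun_eq_iff)
  moreover have "Fmb = estimator"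
    by (simp add: \<open>N = total\<close> fun_eq_iff Fmb_def estimator_def gn_def Fn_def ecdf_def weights_def[abs_def])
  moreover have "\<sigma>2 = asym_var / slope\<^sup>2"
    by (simp add: \<sigma>2_def g_def deriv_gmix_lam asym_var_def mult.assoc)
  ultimately show ?thesis
    using scaled_error_weak_conv by (simp add: scaled_error_def[abs_def])
qed

end
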